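(* Let $G=(V,E)$ be a finite simple graph with $V=\{x_1,\dots,x_r\}$, $E=\{e_1,\dots,e_n\}$, and suppose $(x_1,x_2,x_3)$ is a simple path of $G$ with edges $e_1=\{x_1,x_2\}$, $e_2=\{x_2,x_3\}$. Let $s=w_1x_1+w_2x_2+\cdots+w_rx_r\in\operatorname{Im}(\varphi_G)$ with $w_1<w_2$. Then the simplicial complex $\Delta^G_s$ is acyclic (all its reduced homology groups with coefficients in $\mathbb{K}$ vanish).
   Context: $\mathbb{N}[V]$ and $\mathbb{N}[E]$ denote the free commutative monoids on $V$ and on $E$, and $\varphi_G:\mathbb{N}[E]\to\mathbb{N}[V]$ is the monoid homomorphism with $\varphi_G(e_j)=x_{j_1}+x_{j_2}$ for $e_j=\{x_{j_1},x_{j_2}\}$. For $F\subseteq[n]$ put $e_F=\sum_{i\in F}e_i$, and for $s\in\mathbb{N}[V]$ let $\Delta^G_s=\{F\subseteq[n]: s-\varphi_G(e_F)\in\operatorname{Im}(\varphi_G)\}$ (here $s-\varphi_G(e_F)$ is computed in $\mathbb{Z}^V$), a simplicial complex on $[n]$. A path is a walk $(y_0,\dots,y_m)$ (consecutive vertices adjacent) whose interior vertices $y_1,\dots,y_{m-1}$ have degree exactly $2$ in $G$; a path is simple if the common neighbours of its first and last vertices all lie on the path. *)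

theory Defs
  imports Main
begin

text \<open>A finite simple graph with vertex set V = {1..r} (vertex x_i is the number i)
and edge list e_1, ..., e_n (edge e_j is the 2-element set e j), all edges distinct.\<close>

definition simple_graph :: "nat \<Rightarrow> nat \<Rightarrow> (nat \<Rightarrow> nat set) \<Rightarrow> bool" where
  "simple_graph r n e \<longleftrightarrow>
     (\<forall>j\<in>{1..n}. e j \<subseteq> {1..r} \<and> card (e j) = 2) \<and> inj_on e {1..n}"

definition adj :: "nat \<Rightarrow> (nat \<Rightarrow> nat set) \<Rightarrow> nat \<Rightarrow> nat \<Rightarrow> bool" where
  "adj n e u v \<longleftrightarrow> (\<exists>j\<in>{1..n}. e j = {u, v})"

definition degree :: "nat \<Rightarrow> (nat \<Rightarrow> nat set) \<Rightarrow> nat \<Rightarrow> nat" where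
  "degree n e v = card {j\<in>{1..n}. v \<in> e j}"

definition is_path :: "nat \<Rightarrow> (nat \<Rightarrow> nat set) \<Rightarrow> nat list \<Rightarrow> bool" where
  "is_path n e ys \<longleftrightarrow> ys \<noteq> [] \<and>
     (\<forall>i. Suc i < length ys \<longrightarrow> adj n e (ys ! i) (ys ! Suc i)) \<and>
     (\<forall>i. 0 < i \<and> Suc i < length ys \<longrightarrow> degree n e (ys ! i) = 2)"

definition is_simple_path :: "nat \<Rightarrow> nat \<Rightarrow> (nat \<Rightarrow> nat set) \<Rightarrow> nat list \<Rightarrow> bool" where
  "is_simple_path r n e ys \<longleftrightarrow> is_path n e ys \<and>
     (\<forall>y\<in>{1..r}. adj n e (hd ys) y \<and> adj n e (last ys) y \<longrightarrow> y \<in> set ys)"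

text \<open>Membership of an integer vector t \<in> \<int>^V in Im(phi_G): t = phi_G(sum_j a_j e_j), a_j \<in> \<nat>.\<close>
definition in_Im_phi :: "nat \<Rightarrow> nat \<Rightarrow> (nat \<Rightarrow> nat set) \<Rightarrow> (nat \<Rightarrow> int) \<Rightarrow> bool" where
  "in_Im_phi r n e t \<longleftrightarrow> (\<exists>a :: nat \<Rightarrow> nat.
      \<forall>x\<in>{1..r}. t x = (\<Sum>j\<in>{1..n}. int (a j) * (if x \<in> e j then 1 else 0)))"

definition phi_eF :: "nat \<Rightarrow> (nat \<Rightarrow> nat set) \<Rightarrow> nat set \<Rightarrow> nat \<Rightarrow> int" where
  "phi_eF n e F x = (\<Sum>j\<in>F. if x \<in> e j then 1 else 0)"

definition Delta :: "nat \<Rightarrow> nat \<Rightarrow> (nat \<Rightarrow> nat set) \<Rightarrow> (nat \<Rightarrow> int) \<Rightarrow> nat set set" where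
  "Delta r n e s = {F. F \<subseteq> {1..n} \<and> in_Im_phi r n e (\<lambda>x. s x - phi_eF n e F x)}"

text \<open>Simplicial boundary with coefficients in a field: a chain is a function from faces to 'k.
 Faces of dimension d are the members of D of cardinality d+1 (the empty face has dimension -1,
 giving the augmented / reduced chain complex).\<close>
definition bd :: "nat set set \<Rightarrow> nat set \<Rightarrow> (nat set \<Rightarrow> 'k::field) \<Rightarrow> nat set \<Rightarrow> 'k" where
  "bd D U c F = (\<Sum>i\<in>U - F. if insert i F \<in> D
      then (-1) ^ card {j\<in>F. j < i} * c (insert i F) else 0)"

definition chain_on :: "nat set set \<Rightarrow> nat \<Rightarrow> (nat set \<Rightarrow> 'k::field) \<Rightarrow> bool" where
  "chain_on D m c \<longleftrightarrow> (\<forall>F. c F \<noteq> 0 \<longrightarrow> F \<in> D \<and> card F = m)"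

definition acyclic_over :: "'k::field itself \<Rightarrow> nat set \<Rightarrow> nat set set \<Rightarrow> bool" where
  "acyclic_over _ U D \<longleftrightarrow>
    (\<forall>m (c :: nat set \<Rightarrow> 'k). chain_on D m c \<and>
        (m > 0 \<longrightarrow> (\<forall>F. card F = m - 1 \<longrightarrow> bd D U c F = 0)) \<longrightarrow>
        (\<exists>d :: nat set \<Rightarrow> 'k. chain_on D (Suc m) d \<and> (\<forall>F. card F = m \<longrightarrow> bd D U d F = c F)))"

end

theory Submission
  imports Defs
begin

text \<open>The complex is a cone with apex the edge e_2. If F is a face not containing e_2 and
  s - phi(e_F) = phi(sum a_j e_j), then reading this off at x_1 and at x_2, whose only edges are
  e_1 and e_2, gives a_2 \<ge> w_2 - w_1 > 0; so one copy of e_2 can be moved from the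
  representation into F. A cone is acyclic because coning off the apex is a contracting chain
  homotopy.\<close>

definition face_sign :: "nat set \<Rightarrow> nat \<Rightarrow> 'k::comm_ring_1" where
  "face_sign F i = (-1) ^ card {j\<in>F. j < i}"

lemma face_sign_square: "face_sign F i * face_sign F i = (1::'k::comm_ring_1)"
  by (simp add: face_sign_def flip: power_add)

lemma card_less_insert:
  assumes "finite H" "v \<notin> H"
  shows "card {j\<in>insert v H. j < i} = card {j\<in>H. j < i} + (if v < i then 1 else 0)"
proof -
  have "{j\<in>insert v H. j < i} = (if v < i then insert v {j\<in>H. j < i} else {j\<in>H. j < i})"
    by auto
  then show ?thesis using assms by auto
qed

lemma face_sign_insert_swap:
  assumes "finite H" "v \<notin> H" "i \<notin> H" "i \<noteq> v"
  shows "face_sign (insert v H) i * face_sign (insert i H) v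
    = - (face_sign H v * face_sign H i :: 'k::comm_ring_1)"
proof -
  have "face_sign (insert v H) i * face_sign (insert i H) v
      = ((-1::'k) ^ (card {j\<in>H. j < i} + card {j\<in>H. j < v} + 1))"
    using assms card_less_insert[OF assms(1,2), of i] card_less_insert[OF assms(1,3), of v]
    unfolding face_sign_def by (cases "v < i") (auto simp: power_add)
  then show ?thesis by (simp add: face_sign_def power_add mult.commute)
qed

lemma bd_chain_on:
  assumes "chain_on D m c"
  shows "bd D U c F = (\<Sum>i\<in>U - F. face_sign F i * c (insert i F))"
  unfolding bd_def face_sign_def
  by (rule sum.cong) (use assms in \<open>auto simp: chain_on_def\<close>)

lemma bd_infinite_face:
  assumes "finite U" "D \<subseteq> Pow U" "infinite F"
  shows "bd D U c F = 0"
proof -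
  have "insert i F \<notin> D" for i
    using assms by (meson PowD finite_insert finite_subset subsetD)
  then show ?thesis by (simp add: bd_def)
qed

definition cone_chain :: "nat \<Rightarrow> (nat set \<Rightarrow> 'k::field) \<Rightarrow> nat set \<Rightarrow> 'k" where
  "cone_chain v c G = (if v \<in> G then face_sign (G - {v}) v * c (G - {v}) else 0)"

lemma chain_on_cone_chain:
  assumes "chain_on D m c" "\<And>X. X \<in> D \<Longrightarrow> finite X" "\<And>F. F \<in> D \<Longrightarrow> insert v F \<in> D"
  shows "chain_on D (Suc m) (cone_chain v c)"
  unfolding chain_on_def
proof (intro allI impI)
  fix G assume "cone_chain v c G \<noteq> 0"
  then have "v \<in> G" and "c (G - {v}) \<noteq> 0" by (auto simp: cone_chain_def split: if_splits)
  then have "G - {v} \<in> D" and "card (G - {v}) = m" using assms(1) by (auto simp: chain_on_def)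
  with \<open>v \<in> G\<close> assms(2,3) show "G \<in> D \<and> card G = Suc m"
    by (metis card_Suc_Diff1 finite_Diff2 finite_insert insert_Diff)
qed

lemma bd_cone_chain_apex_notin:
  fixes c :: "nat set \<Rightarrow> 'k::field"
  assumes "finite U" "v \<in> U" "v \<notin> F" "chain_on D m c"
    "\<And>X. X \<in> D \<Longrightarrow> finite X" "\<And>F. F \<in> D \<Longrightarrow> insert v F \<in> D"
  shows "bd D U (cone_chain v c) F = c F"
proof -
  have "bd D U (cone_chain v c) F = (\<Sum>i\<in>U - F. face_sign F i * cone_chain v c (insert i F))"
    by (rule bd_chain_on[OF chain_on_cone_chain[OF assms(4-6)]])
  also have "\<dots> = face_sign F v * cone_chain v c (insert v F)"
  proof (rule sum.remove[of _ v, THEN trans])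
    have "cone_chain v c (insert i F) = 0" if "i \<noteq> v" for i
      using assms(3) that by (simp add: cone_chain_def)
    then show "face_sign F v * cone_chain v c (insert v F)
        + (\<Sum>i\<in>U - F - {v}. face_sign F i * cone_chain v c (insert i F))
        = face_sign F v * cone_chain v c (insert v F)"
      by simp
  qed (use assms in auto)
  also have "\<dots> = c F"
    using assms(3) face_sign_square[of F v, where 'k='k]
    by (simp add: cone_chain_def mult.assoc[symmetric])
  finally show ?thesis .
qed

text \<open>Together with the previous lemma this is the homotopy identity
  \<open>\<partial>h + h\<partial> = id\<close> for the cone operator \<open>h = cone_chain v\<close>.\<close>

lemma bd_cone_chain_apex_in:
  fixes c :: "nat set \<Rightarrow> 'k::field"
  assumes "finite U" "v \<in> U" "v \<in> F" "finite F" "chain_on D m c"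
    "\<And>X. X \<in> D \<Longrightarrow> finite X" "\<And>F. F \<in> D \<Longrightarrow> insert v F \<in> D"
  shows "bd D U (cone_chain v c) F = c F - face_sign (F - {v}) v * bd D U c (F - {v})"
proof -
  define H where "H = F - {v}"
  have F: "F = insert v H" "v \<notin> H" "finite H" using assms(3,4) by (auto simp: H_def)
  have "U - H = insert v (U - F)" using assms(2) F by auto
  then have bd_H:
      "bd D U c H = face_sign H v * c F + (\<Sum>i\<in>U - F. face_sign H i * c (insert i H))"
    unfolding bd_chain_on[OF assms(5)] using assms(1,3) by (simp add: F(1)[symmetric])
  have "bd D U (cone_chain v c) F = (\<Sum>i\<in>U - F. face_sign F i * cone_chain v c (insert i F))"
    by (rule bd_chain_on[OF chain_on_cone_chain[OF assms(5-7)]])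
  also have "\<dots> = (\<Sum>i\<in>U - F. - face_sign H v * (face_sign H i * c (insert i H)))"
  proof (rule sum.cong[OF refl])
    fix i assume "i \<in> U - F"
    then have "i \<noteq> v" "i \<notin> H" using F by auto
    then have "cone_chain v c (insert i F) = face_sign (insert i H) v * c (insert i H)"
      using F by (simp add: cone_chain_def insert_Diff_if)
    then show "face_sign F i * cone_chain v c (insert i F)
        = - face_sign H v * (face_sign H i * c (insert i H))"
      using face_sign_insert_swap[OF F(3,2) \<open>i \<notin> H\<close> \<open>i \<noteq> v\<close>, where 'k='k] F(1)
      by (simp add: mult.assoc[symmetric])
  qed
  also have "\<dots> = - face_sign H v * (\<Sum>i\<in>U - F. face_sign H i * c (insert i H))"
    by (simp only: sum_distrib_left sum_negf mult_minus_left)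
  also have "\<dots> = - face_sign H v * (bd D U c H - face_sign H v * c F)"
    using bd_H by simp
  also have "\<dots> = (face_sign H v * face_sign H v) * c F - face_sign H v * bd D U c H"
    by (simp add: algebra_simps)
  also have "\<dots> = c F - face_sign H v * bd D U c H"
    by (simp add: face_sign_square)
  finally show ?thesis by (simp add: H_def)
qed

lemma cone_acyclic:
  assumes "finite U" "v \<in> U" "D \<subseteq> Pow U" and cone: "\<And>F. F \<in> D \<Longrightarrow> insert v F \<in> D"
  shows "acyclic_over TYPE('k::field) U D"
  unfolding acyclic_over_def
proof (intro allI impI, elim conjE)
  fix m and c :: "nat set \<Rightarrow> 'k"
  assume c: "chain_on D m c" and cycle: "0 < m \<longrightarrow> (\<forall>F. card F = m - 1 \<longrightarrow> bd D U c F = 0)"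
  have fin: "finite X" if "X \<in> D" for X
    using that assms(1,3) finite_subset by blast
  have "bd D U (cone_chain v c) F = c F" if "card F = m" for F
  proof (cases "finite F")
    case False
    then have "F \<notin> D" using fin by blast
    then have "c F = 0" using c by (auto simp: chain_on_def)
    then show ?thesis using bd_infinite_face[OF assms(1,3) False] by simp
  next
    case True
    show ?thesis
    proof (cases "v \<in> F")
      case False
      show ?thesis by (rule bd_cone_chain_apex_notin[OF assms(1,2) False c fin cone])
    next
      case v: True
      then have "card (F - {v}) = m - 1" "0 < m"
        using True \<open>card F = m\<close> by (auto simp: card_gt_0_iff)
      then have "bd D U c (F - {v}) = 0" using cycle by blast
      then show ?thesis using bd_cone_chain_apex_in[OF assms(1,2) v True c fin cone] by simp
    qed
  qed
  moreover have "chain_on D (Suc m) (cone_chain v c)"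
    using chain_on_cone_chain c fin cone by blast
  ultimately show "\<exists>d. chain_on D (Suc m) d \<and> (\<forall>F. card F = m \<longrightarrow> bd D U d F = c F)"
    by blast
qed

lemma phi_eF_insert:
  assumes "finite F" "k \<notin> F"
  shows "phi_eF n e (insert k F) x = phi_eF n e F x + (if x \<in> e k then 1 else 0)"
  using assms by (simp add: phi_eF_def)

lemma sum_over_edges_at:
  assumes "finite J"
  shows "(\<Sum>j\<in>J. f j * (if x \<in> e j then 1 else 0)) = (\<Sum>j\<in>{j\<in>J. x \<in> e j}. f j :: int)"
  using assms by (simp add: sum.inter_filter if_distrib cong: if_cong)

lemma in_Im_phi_diff_edge:
  assumes t: "\<forall>x\<in>{1..r}. t x = (\<Sum>j\<in>{1..n}. int (a j) * (if x \<in> e j then 1 else 0))"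
    and "k \<in> {1..n}" "0 < a k"
  shows "in_Im_phi r n e (\<lambda>x. t x - (if x \<in> e k then 1 else 0))"
  unfolding in_Im_phi_def
proof (intro exI ballI)
  fix x assume "x \<in> {1..r}"
  have "(\<Sum>j\<in>{1..n}. int ((a(k := a k - 1)) j) * (if x \<in> e j then 1 else 0))
      = (\<Sum>j\<in>{1..n}. int (a j) * (if x \<in> e j then 1 else 0)
          - (if j = k then if x \<in> e k then 1 else 0 else 0))"
    using assms(3) by (intro sum.cong) (auto simp: of_nat_diff)
  also have "\<dots> = t x - (if x \<in> e k then 1 else 0)"
    using t \<open>x \<in> {1..r}\<close> assms(2) by (simp add: sum_subtractf)
  finally show "t x - (if x \<in> e k then 1 else 0)
      = (\<Sum>j\<in>{1..n}. int ((a(k := a k - 1)) j) * (if x \<in> e j then 1 else 0))" ..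
qed

lemma edge_coefficient_pos:
  fixes s :: "nat \<Rightarrow> int"
  assumes edges_at_v: "{j\<in>{1..n}. v \<in> e j} = {i, k}" and "i \<noteq> k"
    and "u \<in> e i" "u \<in> {1..r}" "v \<in> {1..r}" "s u < s v"
    and "F \<subseteq> {1..n}" "k \<notin> F"
    and a: "\<forall>x\<in>{1..r}.
      s x - phi_eF n e F x = (\<Sum>j\<in>{1..n}. int (a j) * (if x \<in> e j then 1 else 0))"
  shows "0 < a k"
proof -
  have ik: "i \<in> {1..n}" "k \<in> {1..n}" using edges_at_v by auto
  have finF: "finite F" using \<open>F \<subseteq> {1..n}\<close> finite_subset by blast
  define b :: int where "b = (if i \<in> F then 1 else 0)"
  have "b \<le> phi_eF n e F u"
  proof (cases "i \<in> F")
    case True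
    then have "(if u \<in> e i then 1 else 0) \<le> phi_eF n e F u"
      unfolding phi_eF_def by (rule member_le_sum) (auto simp: finF)
    then show ?thesis using True \<open>u \<in> e i\<close> by (simp add: b_def)
  qed (simp add: b_def phi_eF_def sum_nonneg)
  moreover have "int (a i) \<le> s u - phi_eF n e F u"
  proof -
    have "int (a i) * (if u \<in> e i then 1 else 0)
        \<le> (\<Sum>j\<in>{1..n}. int (a j) * (if u \<in> e j then 1 else 0))"
      by (rule member_le_sum) (use ik in auto)
    then show ?thesis using a \<open>u \<in> {1..r}\<close> \<open>u \<in> e i\<close> by simp
  qed
  moreover have "phi_eF n e F v = b"
  proof -
    have "{j\<in>F. v \<in> e j} = F \<inter> {j\<in>{1..n}. v \<in> e j}"
      using \<open>F \<subseteq> {1..n}\<close> by blast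
    also have "\<dots> = F \<inter> {i}"
      using edges_at_v \<open>k \<notin> F\<close> by auto
    finally have "{j\<in>F. v \<in> e j} = F \<inter> {i}" .
    then show ?thesis
      unfolding phi_eF_def using sum_over_edges_at[OF finF, of "\<lambda>_. 1" v e] by (simp add: b_def)
  qed
  moreover have "s v - phi_eF n e F v = int (a i) + int (a k)"
  proof -
    have "s v - phi_eF n e F v = (\<Sum>j\<in>{1..n}. int (a j) * (if v \<in> e j then 1 else 0))"
      using a \<open>v \<in> {1..r}\<close> by blast
    also have "\<dots> = (\<Sum>j\<in>{j\<in>{1..n}. v \<in> e j}. int (a j))"
      by (rule sum_over_edges_at) simp
    also have "\<dots> = int (a i) + int (a k)"
      unfolding edges_at_v using \<open>i \<noteq> k\<close> by simp
    finally show ?thesis .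
  qed
  ultimately show "0 < a k" using \<open>s u < s v\<close> by linarith
qed

lemma insert_edge_in_Delta:
  fixes s :: "nat \<Rightarrow> int"
  assumes edges_at_v: "{j\<in>{1..n}. v \<in> e j} = {i, k}" and "i \<noteq> k"
    and "u \<in> e i" "u \<in> {1..r}" "v \<in> {1..r}" "s u < s v"
    and F: "F \<in> Delta r n e s"
  shows "insert k F \<in> Delta r n e s"
proof (cases "k \<in> F")
  case True
  then show ?thesis using F by (simp add: insert_absorb)
next
  case False
  have "k \<in> {1..n}" using edges_at_v by auto
  have "F \<subseteq> {1..n}" and "in_Im_phi r n e (\<lambda>x. s x - phi_eF n e F x)"
    using F by (auto simp: Delta_def)
  then obtain a where a: "\<forall>x\<in>{1..r}.
      s x - phi_eF n e F x = (\<Sum>j\<in>{1..n}. int (a j) * (if x \<in> e j then 1 else 0))"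
    unfolding in_Im_phi_def by blast
  have "0 < a k"
    using edge_coefficient_pos[OF assms(1-6) \<open>F \<subseteq> {1..n}\<close> False a] .
  then have "in_Im_phi r n e (\<lambda>x. s x - phi_eF n e F x - (if x \<in> e k then 1 else 0))"
    using in_Im_phi_diff_edge[OF a \<open>k \<in> {1..n}\<close>] by blast
  moreover have "finite F" using \<open>F \<subseteq> {1..n}\<close> finite_subset by blast
  ultimately show ?thesis
    using \<open>F \<subseteq> {1..n}\<close> \<open>k \<in> {1..n}\<close> False
    by (simp add: Delta_def phi_eF_insert algebra_simps)
qed

lemma is_path_degree_second:
  assumes "is_path n e (u # v # x # ys)"
  shows "degree n e v = 2"
  using assms unfolding is_path_def
  by (metis Suc_less_eq length_Cons nth_Cons_0 nth_Cons_Suc zero_less_Suc)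

lemma edges_at_degree_two:
  assumes "degree n e v = 2" "i \<noteq> k" "i \<in> {1..n}" "k \<in> {1..n}" "v \<in> e i" "v \<in> e k"
  shows "{j\<in>{1..n}. v \<in> e j} = {i, k}"
proof -
  have "{i, k} \<subseteq> {j\<in>{1..n}. v \<in> e j}" using assms(3-6) by blast
  moreover have "card {j\<in>{1..n}. v \<in> e j} = card {i, k}"
    using assms(1,2) by (simp add: degree_def)
  ultimately show ?thesis by (intro card_subset_eq[symmetric]) auto
qed

theorem lemma3p6:
  fixes r n :: nat and e :: "nat \<Rightarrow> nat set" and w :: "nat \<Rightarrow> nat"
  assumes "simple_graph r n e"
    and "2 \<le> n"
    and "is_simple_path r n e [1, 2, 3]"
    and "e 1 = {1, 2}" and "e 2 = {2, 3}"
    and "in_Im_phi r n e (\<lambda>x. int (w x))"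
    and "w 1 < w 2"
  shows "acyclic_over TYPE('k::field) {1..n} (Delta r n e (\<lambda>x. int (w x)))"
proof (rule cone_acyclic[where v = 2])
  show "finite {1..n}" "2 \<in> {1..n}" using assms(2) by auto
  show "Delta r n e (\<lambda>x. int (w x)) \<subseteq> Pow {1..n}" by (auto simp: Delta_def)
next
  fix F assume F: "F \<in> Delta r n e (\<lambda>x. int (w x))"
  have "degree n e 2 = 2"
    using assms(3) unfolding is_simple_path_def by (blast intro: is_path_degree_second)
  then have edges_at_2: "{j\<in>{1..n}. 2 \<in> e j} = {1, 2}"
    using assms(2,4,5) by (intro edges_at_degree_two) auto
  have "e 1 \<subseteq> {1..r}" using assms(1,2) unfolding simple_graph_def by auto
  then have "1 \<in> {1..r}" "2 \<in> {1..r}" using assms(4) by auto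
  with edges_at_2 show "insert 2 F \<in> Delta r n e (\<lambda>x. int (w x))"
    using F assms(4,7) by (intro insert_edge_in_Delta[where u = 1 and v = 2 and i = 1]) auto
qed

end
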